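(* Let $\Sigma$ be an alphabet of $n$ characters with $n\ge 9$, and let $\sigma$ be a random string of length $q'\le\sqrt n$ whose characters are chosen independently and uniformly at random from $\Sigma$. Then for any $\gamma\ge 4$, the probability that $\sigma$ contains $\gamma+1$ or more reappearing characters is at most $e^{-\gamma}$.
   Context: A character occurrence in a string is reappearing if the same character already occurs somewhere to its left; e.g. in $1211$ the second and third $1$'s are reappearing. *)

theory Defs
  imports "HOL-Probability.Probability"
begin

definition reappearing_positions :: "'a list \<Rightarrow> nat set" where
  "reappearing_positions xs = {i. i < length xs \<and> xs ! i \<in> set (take i xs)}"

definition num_reappearing :: "'a list \<Rightarrow> nat" where
  "num_reappearing xs = card (reappearing_positions xs)"

definition strings_of_length :: "'a set \<Rightarrow> nat \<Rightarrow> 'a list set" where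
  "strings_of_length S q = {xs. set xs \<subseteq> S \<and> length xs = q}"

end

theory Submission
  imports Defs
begin

text \<open>Union bound over the \<open>k\<close>-sets \<open>I\<close> of positions, \<open>k = \<lceil>\<gamma>\<rceil> + 1\<close>. Counting
  strings letter by letter, a position in \<open>I\<close> must repeat one of fewer than \<open>q\<close>
  earlier letters, so all of \<open>I\<close> is reappearing with probability at most \<open>(q/n)^k\<close>.
  Hence the probability is at most \<open>(q choose k) (q/n)^k \<le> (q\<^sup>2/n)^k / k! \<le> 1/k!\<close>,
  and \<open>1/k! \<le> e^(1-k) \<le> e^(-\<gamma>)\<close> once \<open>k \<ge> 5\<close>.\<close>

lemma finite_strings_of_length: "finite S \<Longrightarrow> finite (strings_of_length S m)"
  unfolding strings_of_length_def by (rule finite_lists_length_eq)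

lemma card_strings_of_length: "finite S \<Longrightarrow> card (strings_of_length S m) = card S ^ m"
  unfolding strings_of_length_def by (rule card_lists_length_eq)

lemma reappearing_positions_less: "reappearing_positions xs \<subseteq> {..<length xs}"
  unfolding reappearing_positions_def by auto

lemma reappearing_positions_snoc:
  "reappearing_positions (ys @ [c]) =
     reappearing_positions ys \<union> (if c \<in> set ys then {length ys} else {})"
  unfolding reappearing_positions_def by (auto simp: nth_append less_Suc_eq)

definition strings_reappearing_at :: "'a set \<Rightarrow> nat set \<Rightarrow> nat \<Rightarrow> 'a list set" where
  "strings_reappearing_at S I m =
     {xs \<in> strings_of_length S m. I \<inter> {..<m} \<subseteq> reappearing_positions xs}"

lemma finite_strings_reappearing_at: "finite S \<Longrightarrow> finite (strings_reappearing_at S I m)"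
  unfolding strings_reappearing_at_def by (simp add: finite_strings_of_length)

lemma strings_reappearing_at_Suc:
  "strings_reappearing_at S I (Suc m) \<subseteq>
     (\<lambda>(ys, c). ys @ [c]) `
       Sigma (strings_reappearing_at S I m) (\<lambda>ys. if m \<in> I then set ys else S)"
proof
  fix xs assume xs: "xs \<in> strings_reappearing_at S I (Suc m)"
  then obtain ys c where xs_eq: "xs = ys @ [c]" and len: "length ys = m"
    by (auto simp: strings_reappearing_at_def strings_of_length_def length_Suc_conv_rev)
  have set_xs: "set ys \<subseteq> S" "c \<in> S" and
    reap: "I \<inter> {..<Suc m} \<subseteq> reappearing_positions ys \<union> (if c \<in> set ys then {m} else {})"
    using xs by (auto simp: strings_reappearing_at_def strings_of_length_def xs_eq len
        reappearing_positions_snoc)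
  have "I \<inter> {..<m} \<subseteq> reappearing_positions ys"
    using reap by (auto split: if_splits)
  then have ys: "ys \<in> strings_reappearing_at S I m"
    using set_xs len by (simp add: strings_reappearing_at_def strings_of_length_def)
  have "m \<notin> reappearing_positions ys"
    using reappearing_positions_less[of ys] len by auto
  then have "m \<in> I \<Longrightarrow> c \<in> set ys"
    using reap by (auto split: if_splits)
  with ys set_xs show "xs \<in> (\<lambda>(ys, c). ys @ [c]) `
       Sigma (strings_reappearing_at S I m) (\<lambda>ys. if m \<in> I then set ys else S)"
    unfolding xs_eq by (auto intro!: image_eqI[where x = "(ys, c)"])
qed

lemma card_strings_reappearing_at_le:
  assumes "finite S"
  shows "card (strings_reappearing_at S I m) \<le> (\<Prod>i<m. if i \<in> I then i else card S)"
proof (induction m)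
  case 0
  have "strings_reappearing_at S I 0 = {[]}"
    by (auto simp: strings_reappearing_at_def strings_of_length_def)
  then show ?case by simp
next
  case (Suc m)
  let ?A = "strings_reappearing_at S I m"
  let ?B = "\<lambda>ys. if m \<in> I then set ys else S"
  let ?b = "if m \<in> I then m else card S"
  have fin_A: "finite ?A" and fin_B: "\<And>ys. finite (?B ys)"
    using assms by (simp_all add: finite_strings_reappearing_at)
  have card_B: "card (?B ys) \<le> ?b" if "ys \<in> ?A" for ys
    using that card_length[of ys]
    by (simp add: strings_reappearing_at_def strings_of_length_def)
  have "card (strings_reappearing_at S I (Suc m)) \<le> card ((\<lambda>(ys, c). ys @ [c]) ` Sigma ?A ?B)"
    by (rule card_mono[OF _ strings_reappearing_at_Suc]) (simp add: fin_A fin_B)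
  also have "\<dots> \<le> card (Sigma ?A ?B)"
    by (rule card_image_le) (simp add: fin_A fin_B)
  also have "\<dots> = (\<Sum>ys\<in>?A. card (?B ys))"
    using fin_A fin_B by (simp add: card_SigmaI)
  also have "\<dots> \<le> card ?A * ?b"
    using card_B sum_bounded_above[of ?A "\<lambda>ys. card (?B ys)" ?b] by (simp add: mult.commute)
  also have "\<dots> \<le> (\<Prod>i<Suc m. if i \<in> I then i else card S)"
    using Suc.IH by simp
  finally show ?case .
qed

lemma prod_if_mem_le_power:
  fixes n :: nat
  assumes "I \<subseteq> {..<q}"
  shows "(\<Prod>i<q. if i \<in> I then i else n) \<le> q ^ card I * n ^ (q - card I)"
proof -
  have "(\<Prod>i<q. if i \<in> I then i else n) = (\<Prod>i\<in>I. i) * n ^ card ({..<q} - I)"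
    using assms by (simp add: prod.If_cases Int_absorb1 Diff_eq)
  also have "(\<Prod>i\<in>I. i) \<le> (\<Prod>i\<in>I. q)"
    using assms by (intro prod_mono) auto
  also have "card ({..<q} - I) = q - card I"
    using assms by (simp add: card_Diff_subset finite_subset)
  finally show ?thesis by simp
qed

lemma prob_num_reappearing_ge:
  assumes "finite S" and "card S = n" and "n > 0"
  shows "measure_pmf.prob (pmf_of_set (strings_of_length S q)) {xs. k \<le> num_reappearing xs}
           \<le> real (q choose k) * (real q / real n) ^ k"
proof -
  define Is where "Is = {I. I \<subseteq> {..<q} \<and> card I = k}"
  let ?W = "strings_of_length S q"
  let ?E = "{xs. k \<le> num_reappearing xs}"
  have fin_W: "finite ?W" and card_W: "card ?W = n ^ q"
    using assms by (simp_all add: finite_strings_of_length card_strings_of_length)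
  have fin_Is: "finite Is" and card_Is: "card Is = q choose k"
    using n_subsets[of "{..<q}" k] by (auto simp: Is_def intro: finite_subset[of _ "Pow {..<q}"])
  have "?W \<inter> ?E \<subseteq> (\<Union>I\<in>Is. strings_reappearing_at S I q)"
  proof
    fix xs assume xs: "xs \<in> ?W \<inter> ?E"
    then obtain I where I: "I \<subseteq> reappearing_positions xs" "card I = k"
      unfolding num_reappearing_def by (auto elim: obtain_subset_with_card_n)
    moreover have "length xs = q"
      using xs by (simp add: strings_of_length_def)
    ultimately have "I \<in> Is" and "xs \<in> strings_reappearing_at S I q"
      using reappearing_positions_less[of xs] xs
      by (auto simp: Is_def strings_reappearing_at_def)
    then show "xs \<in> (\<Union>I\<in>Is. strings_reappearing_at S I q)" by blast
  qed
  then have "card (?W \<inter> ?E) \<le> card (\<Union>I\<in>Is. strings_reappearing_at S I q)"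
    using fin_Is assms(1) by (intro card_mono) (auto simp: finite_strings_reappearing_at)
  also have "\<dots> \<le> (\<Sum>I\<in>Is. card (strings_reappearing_at S I q))"
    using fin_Is by (rule card_UN_le)
  finally have card_E: "real (card (?W \<inter> ?E)) \<le> (\<Sum>I\<in>Is. real (card (strings_reappearing_at S I q)))"
    by (metis of_nat_le_iff of_nat_sum)
  have card_I: "real (card (strings_reappearing_at S I q)) \<le> real n ^ q * (real q / real n) ^ k"
    if "I \<in> Is" for I
  proof -
    have I: "I \<subseteq> {..<q}" "card I = k"
      using that by (auto simp: Is_def)
    then have "k \<le> q"
      using card_mono[of "{..<q}" I] by simp
    have "card (strings_reappearing_at S I q) \<le> q ^ k * n ^ (q - k)"
      using order_trans[OF card_strings_reappearing_at_le[OF assms(1)] prod_if_mem_le_power[OF I(1)]]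
      by (simp add: I assms(2))
    then have "real (card (strings_reappearing_at S I q)) \<le> real q ^ k * real n ^ (q - k)"
      by (metis of_nat_le_iff of_nat_mult of_nat_power)
    also have "\<dots> = real n ^ q * (real q / real n) ^ k"
      using \<open>k \<le> q\<close> assms(3) by (simp add: power_divide power_diff)
    finally show ?thesis .
  qed
  note card_E
  also have "(\<Sum>I\<in>Is. real (card (strings_reappearing_at S I q)))
               \<le> (\<Sum>I\<in>Is. real n ^ q * (real q / real n) ^ k)"
    by (rule sum_mono) (rule card_I)
  also have "\<dots> = real (q choose k) * (real q / real n) ^ k * real n ^ q"
    by (simp add: card_Is)
  finally have "real (card (?W \<inter> ?E)) / real n ^ q \<le> real (q choose k) * (real q / real n) ^ k"
    using assms(3) by (simp add: pos_divide_le_eq)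
  moreover have "?W \<noteq> {}"
    using card_W assms(3) by auto
  ultimately show ?thesis
    using fin_W card_W by (simp add: measure_pmf_of_set)
qed

lemma binomial_mult_ratio_power_le:
  assumes "real q ^ 2 \<le> real n"
  shows "real (q choose k) * (real q / real n) ^ k \<le> 1 / fact k"
proof -
  have "real (q choose k) * fact k \<le> real q ^ k"
    using binomial_fact_pow[of q k] by (metis of_nat_fact of_nat_le_iff of_nat_mult of_nat_power)
  then have "real (q choose k) * fact k * (real q / real n) ^ k \<le> real q ^ k * (real q / real n) ^ k"
    by (intro mult_right_mono) auto
  also have "\<dots> = (real q ^ 2 / real n) ^ k"
    by (simp add: power2_eq_square power_mult_distrib[symmetric])
  also have "\<dots> \<le> 1"
    using assms by (intro power_le_one) (auto simp: divide_le_eq_1)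
  finally show ?thesis
    by (simp add: field_simps)
qed

lemma inverse_fact_le_exp: "k \<ge> 5 \<Longrightarrow> 1 / fact k \<le> exp (1 - real k)"
proof (induction k rule: dec_induct)
  case base
  have "exp 1 ^ 4 \<le> (3 :: real) ^ 4"
    using exp_le by (intro power_mono) auto
  then have "exp 4 \<le> (fact 5 :: real)"
    by (simp add: exp_of_nat_mult[symmetric] fact_numeral)
  then have "1 / fact 5 \<le> 1 / exp (4 :: real)"
    by (intro divide_left_mono) auto
  then show ?case
    by (simp add: exp_minus inverse_eq_divide)
next
  case (step k)
  have "1 / fact (Suc k) = 1 / fact k / real (Suc k)"
    by simp
  also have "\<dots> \<le> exp (1 - real k) / exp 1"
    using step.IH exp_le step.hyps by (intro frac_le) auto
  also have "\<dots> = exp (1 - real (Suc k))"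
    by (simp add: exp_diff exp_minus inverse_eq_divide)
  finally show ?case .
qed

theorem lemma2:
  fixes \<Sigma> :: "'a set" and n q :: nat and \<gamma> :: real
  assumes "finite \<Sigma>" and "card \<Sigma> = n" and "n \<ge> 9"
    and "real q \<le> sqrt (real n)"
    and "\<gamma> \<ge> 4"
  shows "measure_pmf.prob (pmf_of_set (strings_of_length \<Sigma> q))
           {xs. real (num_reappearing xs) \<ge> \<gamma> + 1} \<le> exp (- \<gamma>)"
proof -
  define k where "k = nat \<lceil>\<gamma>\<rceil> + 1"
  have "k \<ge> 5" and "exp (1 - real k) \<le> exp (- \<gamma>)"
    using assms(5) by (auto simp: k_def) linarith
  have "real q ^ 2 \<le> sqrt (real n) ^ 2"
    using assms(4) by (intro power_mono) auto
  then have q_sq: "real q ^ 2 \<le> real n"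
    by simp
  have "{xs. real (num_reappearing xs) \<ge> \<gamma> + 1} \<subseteq> {xs. k \<le> num_reappearing xs}"
    using assms(5) by (auto simp: k_def Suc_le_eq nat_less_iff ceiling_less_iff)
  then have "measure_pmf.prob (pmf_of_set (strings_of_length \<Sigma> q))
               {xs. real (num_reappearing xs) \<ge> \<gamma> + 1}
             \<le> measure_pmf.prob (pmf_of_set (strings_of_length \<Sigma> q)) {xs. k \<le> num_reappearing xs}"
    by (intro measure_pmf.finite_measure_mono) auto
  also have "\<dots> \<le> real (q choose k) * (real q / real n) ^ k"
    using prob_num_reappearing_ge[OF assms(1,2)] assms(3) by simp
  also have "\<dots> \<le> 1 / fact k"
    using q_sq by (rule binomial_mult_ratio_power_le)
  also have "\<dots> \<le> exp (1 - real k)"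
    using \<open>k \<ge> 5\<close> by (rule inverse_fact_le_exp)
  also have "\<dots> \<le> exp (- \<gamma>)"
    by fact
  finally show ?thesis .
qed

end
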